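(* If $x\ge1$ then $\Gamma(x,x)\ge\dfrac{\Gamma(x)}{x^{x}}$, and if $0<x\le1$ then $\Gamma(x,x)\le\dfrac{\Gamma(x)}{x^{x}}$.
   Context: For $x>0,y>0$ the Bigamma function is the (convergent) improper integral $\Gamma(x,y):=\int_0^1(-\ln t)^{x-1}\big(-\ln(1-t)\big)^{y-1}\,dt$. $\Gamma(x)$ (one argument) denotes Euler's gamma function. *)

theory Defs
  imports "HOL-Analysis.Analysis"
begin

text \<open>Bigamma function: the improper integral over (0,1) of a nonnegative integrand,
  rendered as the Lebesgue integral over the open interval (0,1).\<close>
definition Bigamma :: "real \<Rightarrow> real \<Rightarrow> real" where
  "Bigamma x y = (LBINT t:{0<..<1}. (- ln t) powr (x - 1) * (- ln (1 - t)) powr (y - 1))"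

end

theory Submission
  imports Defs "HOL-Real_Asymp.Real_Asymp"
begin

text \<open>The substitution \<open>t = 1 - exp (-u/x)\<close> turns the Gamma integral into
  \<open>\<Gamma>(x)/x^x = \<integral>\<^sub>0\<^sup>1 ((1-t)(-ln(1-t)))^(x-1) dt\<close>. Since \<open>1 - t \<le> -ln t\<close>, the integrand of \<open>\<Gamma>(x,x)\<close>,
  namely \<open>((-ln t)(-ln(1-t)))^(x-1)\<close>, dominates this one for \<open>x \<ge> 1\<close> and is dominated by it for
  \<open>x \<le> 1\<close>. For \<open>x \<ge> 1\<close> integrability of the Bigamma integrand comes from
  \<open>(-ln t)(-ln(1-t)) \<le> 1\<close> on \<open>(0,1)\<close>.\<close>

lemma Gamma_real_set_integral:
  fixes x :: real
  assumes x: "x > 0"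
  shows "set_integrable lborel {0<..} (\<lambda>t. t powr (x-1) / exp t)"
    and "(LBINT t:{0<..}. t powr (x-1) / exp t) = Gamma x"
proof -
  define h where "h = (\<lambda>t::real. indicator {0<..} t * (t powr (x-1) / exp t))"
  have "h t = indicator {0..} t * t powr (x - 1) / exp t" for t
    by (cases "t = 0") (auto simp: h_def indicator_def)
  then have "(\<integral>\<^sup>+t. ennreal (h t) \<partial>lborel) = ennreal (Gamma x)"
    using Gamma_conv_nn_integral_real[OF x] by simp
  moreover have "h \<in> borel_measurable lborel" unfolding h_def by measurable
  moreover have "AE t in lborel. 0 \<le> h t" by (auto simp: h_def indicator_def)
  ultimately have "integrable lborel h \<and> integral\<^sup>L lborel h = Gamma x"
    using nn_integral_eq_integrable[of h lborel "Gamma x"] Gamma_real_pos[OF x] by simp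
  then show "set_integrable lborel {0<..} (\<lambda>t. t powr (x-1) / exp t)"
    and "(LBINT t:{0<..}. t powr (x-1) / exp t) = Gamma x"
    by (simp_all add: set_integrable_def set_lebesgue_integral_def h_def)
qed

lemma exp_substitution_powr:
  fixes x u :: real
  assumes x: "x > 0" and u: "u > 0"
  shows "(exp (-u/x) * (u/x)) powr (x-1) * (exp (-u/x) / x) = u powr (x-1) / exp u / x powr x"
proof -
  have "(exp (-u/x) * (u/x)) powr (x-1) * (exp (-u/x) / x)
      = u powr (x-1) * (exp (-u/x * (x-1)) * exp (-u/x)) / (x powr (x-1) * x)"
    using u x by (simp add: powr_mult powr_divide exp_powr_real)
  also have "exp (-u/x * (x-1)) * exp (-u/x) = exp (-u)"
    using x by (simp add: exp_add[symmetric] field_simps)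
  also have "x powr (x-1) * x = x powr x"
    using x by (simp add: powr_diff)
  finally show ?thesis by (simp add: exp_minus field_simps)
qed

lemma Gamma_div_powr_self_set_integral:
  fixes x :: real
  assumes x: "x > 0"
  shows "set_integrable lborel {0<..<1} (\<lambda>t. ((1-t) * (-ln(1-t))) powr (x-1))"
    and "(LBINT t:{0<..<1}. ((1-t) * (-ln(1-t))) powr (x-1)) = Gamma x / x powr x"
proof -
  define f where "f = (\<lambda>t::real. ((1-t) * (-ln(1-t))) powr (x-1))"
  define g where "g = (\<lambda>u::real. 1 - exp (-u/x))"
  define g' where "g' = (\<lambda>u::real. exp (-u/x) / x)"
  have fg: "f (g u) * g' u = u powr (x-1) / exp u / x powr x" if "u > 0" for u
    using exp_substitution_powr[OF x that] by (simp add: f_def g_def g'_def)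
  have int_fg: "set_integrable lborel (einterval 0 \<infinity>) (\<lambda>u. f (g u) * g' u)"
  proof -
    have "set_integrable lborel {0<..} (\<lambda>u. u powr (x-1) / exp u / x powr x)"
      by (intro set_integrable_divide Gamma_real_set_integral x)
    then show ?thesis
      by (rule set_integrable_cong[THEN iffD1, rotated -1])
        (auto simp: fg einterval_iff zero_ereal_def)
  qed
  have cont_f: "isCont f (g u)" if "0 < ereal u" for u
  proof -
    have "exp (-u/x) < 1" using that x by (simp add: zero_ereal_def)
    then show ?thesis unfolding f_def g_def
      by (intro continuous_intros) (auto simp: ln_less_zero_iff mult_pos_neg)
  qed
  have lim_0: "((ereal \<circ> g \<circ> real_of_ereal) \<longlongrightarrow> 0) (at_right 0)"
    using x unfolding zero_ereal_def ereal_tendsto_simps g_def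
    by (auto intro!: tendsto_eq_intros)
  have "(g \<longlongrightarrow> 1) at_top" unfolding g_def using x by real_asymp
  then have lim_top: "((ereal \<circ> g \<circ> real_of_ereal) \<longlongrightarrow> 1) (at_left \<infinity>)"
    unfolding one_ereal_def ereal_tendsto_simps .
  note subst = interval_integral_substitution_nonneg[where f=f and g=g and g'=g',
      OF _ _ cont_f _ _ _ lim_0 lim_top int_fg]
  have deriv: "DERIV g u :> g' u" for u
    using x unfolding g_def g'_def by (auto intro!: derivative_eq_intros)
  have cont_g': "isCont g' u" for u
    using x unfolding g'_def by (intro continuous_intros) auto
  have "einterval 0 1 = {0<..<(1::real)}"
    by (auto simp: einterval_iff zero_ereal_def one_ereal_def)
  then show "set_integrable lborel {0<..<1} (\<lambda>t. ((1-t) * (-ln(1-t))) powr (x-1))"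
    using subst(1) deriv cont_g' x by (simp add: f_def g'_def)
  have "(LBINT t:{0<..<1}. f t) = (LBINT t=0..1. f t)"
    by (subst interval_integral_Ioo) (auto simp: zero_ereal_def one_ereal_def)
  also have "\<dots> = (LBINT u=0..\<infinity>. f (g u) * g' u)"
    using subst(2) deriv cont_g' x by (simp add: f_def g'_def)
  also have "\<dots> = (LBINT u:{0<..}. u powr (x-1) / exp u / x powr x)"
    by (subst interval_integral_Ioi)
      (auto simp: zero_ereal_def fg intro!: set_lebesgue_integral_cong)
  also have "\<dots> = Gamma x / x powr x"
    using Gamma_real_set_integral(2)[OF x] by (simp only: set_integral_divide_zero)
  finally show "(LBINT t:{0<..<1}. ((1-t) * (-ln(1-t))) powr (x-1)) = Gamma x / x powr x"
    by (simp add: f_def)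
qed

lemma neg_ln_mult_neg_ln_one_minus_le_one_half:
  fixes t :: real
  assumes t: "0 < t" "t \<le> 1/2"
  shows "(-ln t) * (-ln (1-t)) \<le> 1"
proof -
  have "- t - 2 * t\<^sup>2 \<le> ln (1 - t)" "2 * t\<^sup>2 \<le> t"
    using ln_one_minus_pos_lower_bound[of t] t by (auto simp: power2_eq_square)
  then have ln_one_minus: "-ln (1-t) \<le> 2 * t" by linarith
  define s where "s = sqrt t"
  have s: "0 < s" "t = s * s" using t by (auto simp: s_def)
  have "-ln t = 2 * ln (1/s)" using s by (simp add: ln_mult ln_div)
  also have "\<dots> \<le> 2 * (1/s - 1)" using ln_le_minus_one[of "1/s"] s by simp
  finally have "t * (-ln t) \<le> t * (2 * (1/s - 1))" using t by (intro mult_left_mono) auto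
  also have "\<dots> = 1/2 - (2 * s - 1)\<^sup>2 / 2"
    using s by (simp add: field_simps power2_eq_square)
  also have "\<dots> \<le> 1/2" by simp
  finally have "t * (-ln t) \<le> 1/2" .
  moreover have "0 \<le> -ln t" using t by simp
  ultimately show ?thesis
    using mult_left_mono[OF ln_one_minus, of "-ln t"] by (simp add: algebra_simps)
qed

lemma neg_ln_mult_neg_ln_one_minus_le_one:
  fixes t :: real
  assumes "0 < t" "t < 1"
  shows "(-ln t) * (-ln (1-t)) \<le> 1"
proof (cases "t \<le> 1/2")
  case True
  then show ?thesis using neg_ln_mult_neg_ln_one_minus_le_one_half assms by simp
next
  case False
  then show ?thesis
    using neg_ln_mult_neg_ln_one_minus_le_one_half[of "1-t"] assms by (simp add: mult.commute)
qed

lemma one_minus_mult_neg_ln_le: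
  fixes t :: real
  assumes "0 < t" "t < 1"
  shows "0 < (1-t) * (-ln (1-t))" and "(1-t) * (-ln (1-t)) \<le> (-ln t) * (-ln (1-t))"
proof -
  have "1 - t \<le> -ln t" using ln_le_minus_one[of t] assms by simp
  then show "(1-t) * (-ln (1-t)) \<le> (-ln t) * (-ln (1-t))"
    using assms by (intro mult_right_mono) auto
  show "0 < (1-t) * (-ln (1-t))" using assms by (intro mult_pos_pos) auto
qed

lemma Bigamma_diagonal:
  "Bigamma x x = (LBINT t:{0<..<1}. ((-ln t) * (-ln (1-t))) powr (x-1))"
  unfolding Bigamma_def
  by (intro set_lebesgue_integral_cong) (auto simp flip: powr_mult)

lemma set_integral_le_dominating:
  fixes f g :: "'a \<Rightarrow> real"
  assumes "set_integrable M A g" "set_borel_measurable M A f"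
    and "\<And>x. x \<in> A \<Longrightarrow> 0 \<le> f x" "\<And>x. x \<in> A \<Longrightarrow> f x \<le> g x"
  shows "set_integrable M A f" and "(LINT x:A|M. f x) \<le> (LINT x:A|M. g x)"
proof -
  show f: "set_integrable M A f"
    using assms by (intro set_integrable_bound[OF assms(1,2)] AE_I2) force
  show "(LINT x:A|M. f x) \<le> (LINT x:A|M. g x)"
    by (rule set_integral_mono[OF f assms(1,4)])
qed

theorem mainTheorem7:
  fixes x :: real
  shows "(x \<ge> 1 \<longrightarrow> Bigamma x x \<ge> Gamma x / x powr x)
       \<and> (0 < x \<and> x \<le> 1 \<longrightarrow> Bigamma x x \<le> Gamma x / x powr x)"
proof -
  define P where "P t = ((-ln t) * (-ln (1-t))) powr (x-1)" for t :: real
  define Q where "Q t = ((1-t) * (-ln (1-t))) powr (x-1)" for t :: real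
  have P_meas: "set_borel_measurable lborel {0<..<1} P"
    unfolding set_borel_measurable_def P_def by measurable
  have Bigamma: "Bigamma x x = (LBINT t:{0<..<1}. P t)"
    by (simp add: Bigamma_diagonal P_def)
  show ?thesis
  proof (intro conjI impI)
    assume x: "x \<ge> 1"
    have P_le_1: "P t \<le> 1" and Q_le_P: "Q t \<le> P t" if "t \<in> {0<..<1}" for t
      using that x neg_ln_mult_neg_ln_one_minus_le_one[of t] one_minus_mult_neg_ln_le[of t]
        powr_mono2[of "x-1" "(-ln t) * (-ln (1-t))" 1]
      unfolding P_def Q_def by (auto intro!: powr_mono2)
    have "set_integrable lborel {0<..<1::real} (\<lambda>_. 1::real)"
      unfolding set_integrable_def
      by (auto intro!: integrable_real_indicator simp: emeasure_lborel_Ioo)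
    then have "set_integrable lborel {0<..<1} P"
      using set_integral_le_dominating(1)[OF _ P_meas] P_le_1 by (force simp: P_def)
    moreover have "Gamma x / x powr x = (LBINT t:{0<..<1}. Q t)"
      using Gamma_div_powr_self_set_integral x by (simp add: Q_def)
    ultimately show "Bigamma x x \<ge> Gamma x / x powr x"
      using Gamma_div_powr_self_set_integral(1)[of x] x Q_le_P
      by (auto simp: Bigamma Q_def intro!: set_integral_mono)
  next
    assume x: "0 < x \<and> x \<le> 1"
    have "P t \<le> Q t" if "t \<in> {0<..<1}" for t
      using that x one_minus_mult_neg_ln_le[of t]
      unfolding P_def Q_def by (auto intro!: powr_mono2')
    moreover have "0 \<le> P t" for t by (simp add: P_def)
    ultimately have "(LBINT t:{0<..<1}. P t) \<le> (LBINT t:{0<..<1}. Q t)"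
      using Gamma_div_powr_self_set_integral(1)[of x] x
      by (intro set_integral_le_dominating(2)[OF _ P_meas]) (auto simp: Q_def)
    then show "Bigamma x x \<le> Gamma x / x powr x"
      using Gamma_div_powr_self_set_integral(2)[of x] x by (simp add: Bigamma Q_def)
  qed
qed

end
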